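(* Let $\Gamma$ be a bipartite graph with vertex partition $V(\Gamma)=X\cup Y$, $X=\{x_1,\dots,x_{|X|}\}$ nonempty. Suppose that $d(x_i)=s_i$ for $1\le i\le |X|$, that $d(y)=k$ for all $y\in Y$, and that every pair of distinct vertices $y_1,y_2\in Y$ with $d_\Gamma(y_1,y_2)=2$ has exactly $\mu$ common neighbours. Then $$(|Y|-1)\mu\ \ge\ k\left(\frac{|Y|\cdot k}{|X|}-1\right),$$ with equality if and only if $s_1=s_2=\cdots=s_{|X|}$ and every pair of distinct vertices of $Y$ is at distance $2$.
   Context: $d(v)$ denotes the valency of a vertex $v$ and $d_\Gamma(\cdot,\cdot)$ the distance in $\Gamma$. *)

theory Defs
  imports Complex_Main
begin

definition simple_graph :: "'a set \<Rightarrow> ('a \<Rightarrow> 'a \<Rightarrow> bool) \<Rightarrow> bool" where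
  "simple_graph V E \<longleftrightarrow> finite V \<and> (\<forall>u v. E u v \<longrightarrow> u \<in> V \<and> v \<in> V)
     \<and> (\<forall>u v. E u v \<longrightarrow> E v u) \<and> (\<forall>v. \<not> E v v)"

definition bipartite_with :: "'a set \<Rightarrow> ('a \<Rightarrow> 'a \<Rightarrow> bool) \<Rightarrow> 'a set \<Rightarrow> 'a set \<Rightarrow> bool" where
  "bipartite_with V E X Y \<longleftrightarrow> simple_graph V E \<and> V = X \<union> Y \<and> X \<inter> Y = {}
     \<and> (\<forall>u v. E u v \<longrightarrow> (u \<in> X \<and> v \<in> Y) \<or> (u \<in> Y \<and> v \<in> X))"

definition neighbours :: "'a set \<Rightarrow> ('a \<Rightarrow> 'a \<Rightarrow> bool) \<Rightarrow> 'a \<Rightarrow> 'a set" where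
  "neighbours V E v = {w \<in> V. E v w}"

definition degree :: "'a set \<Rightarrow> ('a \<Rightarrow> 'a \<Rightarrow> bool) \<Rightarrow> 'a \<Rightarrow> nat" where
  "degree V E v = card (neighbours V E v)"

text \<open>A walk is a nonempty list of vertices of V, consecutive ones adjacent.
  A walk with list xs has length (number of edges) length xs - 1.\<close>
definition is_walk :: "'a set \<Rightarrow> ('a \<Rightarrow> 'a \<Rightarrow> bool) \<Rightarrow> 'a list \<Rightarrow> bool" where
  "is_walk V E xs \<longleftrightarrow> xs \<noteq> [] \<and> set xs \<subseteq> V \<and> (\<forall>i. Suc i < length xs \<longrightarrow> E (xs ! i) (xs ! Suc i))"

definition has_walk :: "'a set \<Rightarrow> ('a \<Rightarrow> 'a \<Rightarrow> bool) \<Rightarrow> 'a \<Rightarrow> 'a \<Rightarrow> nat \<Rightarrow> bool" where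
  "has_walk V E u v n \<longleftrightarrow> (\<exists>xs. is_walk V E xs \<and> length xs = Suc n \<and> hd xs = u \<and> last xs = v)"

definition graph_dist_is :: "'a set \<Rightarrow> ('a \<Rightarrow> 'a \<Rightarrow> bool) \<Rightarrow> 'a \<Rightarrow> 'a \<Rightarrow> nat \<Rightarrow> bool" where
  "graph_dist_is V E u v n \<longleftrightarrow> has_walk V E u v n \<and> (\<forall>m<n. \<not> has_walk V E u v m)"

end

theory Submission
  imports Defs
begin

(* Count the paths y - x - z with x in X and y, z in Y. Their number is
   sum_x s_x^2 = |Y| k + sum_{y <> z} |N(y) Int N(z)|, and each off-diagonal term is mu if
   d(y,z) = 2 and 0 otherwise, so the number is at most |Y| k + |Y| (|Y| - 1) mu. On the other
   hand sum_x s_x = |Y| k, so by Cauchy-Schwarz the number is at least (|Y| k)^2 / |X|, with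
   equality iff all s_x agree. Comparing the two bounds gives the inequality, and equality holds
   iff both bounds are attained. *)

lemma sum_sum_diff_squared:
  fixes f :: "'a \<Rightarrow> real"
  shows "(\<Sum>a\<in>A. \<Sum>b\<in>A. (f a - f b)\<^sup>2) = 2 * (card A * (\<Sum>a\<in>A. (f a)\<^sup>2) - (\<Sum>a\<in>A. f a)\<^sup>2)"
  by (simp add: power2_diff sum.distrib sum_subtractf sum_distrib_left sum_distrib_right
      power2_eq_square algebra_simps)

lemma square_sum_le_card_mult_sum_squares:
  fixes f :: "'a \<Rightarrow> real"
  shows "(\<Sum>a\<in>A. f a)\<^sup>2 \<le> card A * (\<Sum>a\<in>A. (f a)\<^sup>2)"
proof -
  have "0 \<le> (\<Sum>a\<in>A. \<Sum>b\<in>A. (f a - f b)\<^sup>2)"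
    by (intro sum_nonneg) simp
  then show ?thesis
    unfolding sum_sum_diff_squared by simp
qed

lemma square_sum_eq_card_mult_sum_squares_iff:
  fixes f :: "'a \<Rightarrow> real"
  assumes "finite A"
  shows "(\<Sum>a\<in>A. f a)\<^sup>2 = card A * (\<Sum>a\<in>A. (f a)\<^sup>2) \<longleftrightarrow> (\<forall>a\<in>A. \<forall>b\<in>A. f a = f b)"
proof -
  have "(\<Sum>a\<in>A. f a)\<^sup>2 = card A * (\<Sum>a\<in>A. (f a)\<^sup>2) \<longleftrightarrow>
        (\<Sum>a\<in>A. \<Sum>b\<in>A. (f a - f b)\<^sup>2) = 0"
    unfolding sum_sum_diff_squared by auto
  also have "\<dots> \<longleftrightarrow> (\<forall>a\<in>A. \<forall>b\<in>A. f a = f b)"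
    using assms by (simp add: sum_nonneg_eq_0_iff sum_nonneg)
  finally show ?thesis .
qed

lemma sum_card_related_squared:
  assumes "finite A" "finite B"
  shows "(\<Sum>a\<in>A. card {b\<in>B. R a b} ^ 2) = (\<Sum>b\<in>B. \<Sum>c\<in>B. card {a\<in>A. R a b \<and> R a c})"
proof -
  have "card {b\<in>B. R a b} ^ 2 = (\<Sum>b\<in>B. \<Sum>c\<in>B. of_bool (R a b \<and> R a c))" for a
  proof -
    have "card {b\<in>B. R a b} = (\<Sum>b\<in>B. of_bool (R a b))"
      using assms(2) by (simp add: Int_def)
    then show ?thesis
      by (simp add: power2_eq_square sum_product of_bool_conj)
  qed
  then have "(\<Sum>a\<in>A. card {b\<in>B. R a b} ^ 2) = (\<Sum>a\<in>A. \<Sum>b\<in>B. \<Sum>c\<in>B. of_bool (R a b \<and> R a c))"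
    by simp
  also have "\<dots> = (\<Sum>b\<in>B. \<Sum>c\<in>B. \<Sum>a\<in>A. of_bool (R a b \<and> R a c))"
    by (simp add: sum.swap[of _ A])
  also have "\<dots> = (\<Sum>b\<in>B. \<Sum>c\<in>B. card {a\<in>A. R a b \<and> R a c})"
    using assms by (simp add: Int_def)
  finally show ?thesis .
qed

lemma sum_mono_eq_iff:
  fixes f g :: "'a \<Rightarrow> 'b::ordered_cancel_comm_monoid_add"
  assumes "finite A" and "\<And>a. a \<in> A \<Longrightarrow> f a \<le> g a"
  shows "sum f A = sum g A \<longleftrightarrow> (\<forall>a\<in>A. f a = g a)"
  using sum_mono_inv[of f A g] assms by (auto intro: sum.cong)

lemma sum_off_diagonal_le:
  fixes f :: "'a \<Rightarrow> 'a \<Rightarrow> nat"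
  assumes "finite A" and le: "\<And>a b. a \<in> A \<Longrightarrow> b \<in> A \<Longrightarrow> a \<noteq> b \<Longrightarrow> f a b \<le> m"
  shows "(\<Sum>a\<in>A. \<Sum>b\<in>A-{a}. f a b) \<le> card A * (card A - 1) * m"
    and "(\<Sum>a\<in>A. \<Sum>b\<in>A-{a}. f a b) = card A * (card A - 1) * m \<longleftrightarrow>
         (\<forall>a\<in>A. \<forall>b\<in>A. a \<noteq> b \<longrightarrow> f a b = m)"
proof -
  have full: "card A * (card A - 1) * m = (\<Sum>a\<in>A. \<Sum>b\<in>A-{a}. m)"
    using assms(1) by (simp add: card_Diff_singleton)
  have inner_le: "(\<Sum>b\<in>A-{a}. f a b) \<le> (\<Sum>b\<in>A-{a}. m)" if "a \<in> A" for a
    using le that by (intro sum_mono) auto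
  show "(\<Sum>a\<in>A. \<Sum>b\<in>A-{a}. f a b) \<le> card A * (card A - 1) * m"
    unfolding full using inner_le by (rule sum_mono)
  have inner_eq: "(\<Sum>b\<in>A-{a}. f a b) = (\<Sum>b\<in>A-{a}. m) \<longleftrightarrow> (\<forall>b\<in>A-{a}. f a b = m)"
    if "a \<in> A" for a
    using le that assms(1) by (intro sum_mono_eq_iff) auto
  have "(\<Sum>a\<in>A. \<Sum>b\<in>A-{a}. f a b) = (\<Sum>a\<in>A. \<Sum>b\<in>A-{a}. m) \<longleftrightarrow>
        (\<forall>a\<in>A. (\<Sum>b\<in>A-{a}. f a b) = (\<Sum>b\<in>A-{a}. m))"
    by (rule sum_mono_eq_iff[OF assms(1) inner_le])
  also have "\<dots> \<longleftrightarrow> (\<forall>a\<in>A. \<forall>b\<in>A-{a}. f a b = m)"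
    using inner_eq by (rule ball_cong[OF refl])
  also have "\<dots> \<longleftrightarrow> (\<forall>a\<in>A. \<forall>b\<in>A. a \<noteq> b \<longrightarrow> f a b = m)"
    by auto
  finally show "(\<Sum>a\<in>A. \<Sum>b\<in>A-{a}. f a b) = card A * (card A - 1) * m \<longleftrightarrow>
         (\<forall>a\<in>A. \<forall>b\<in>A. a \<noteq> b \<longrightarrow> f a b = m)"
    unfolding full .
qed

lemma is_walk_Cons_Cons:
  "is_walk V E (a # b # xs) \<longleftrightarrow> a \<in> V \<and> E a b \<and> is_walk V E (b # xs)"
  unfolding is_walk_def by (auto simp: nth_Cons split: nat.splits)

lemma has_walk_0: "has_walk V E u v 0 \<longleftrightarrow> u \<in> V \<and> u = v"
  unfolding has_walk_def is_walk_def by (auto simp: length_Suc_conv intro!: exI[of _ "[v]"])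

lemma has_walk_Suc:
  "has_walk V E u v (Suc n) \<longleftrightarrow> u \<in> V \<and> (\<exists>w. E u w \<and> has_walk V E w v n)"
proof
  assume "has_walk V E u v (Suc n)"
  then obtain w ys where "is_walk V E (u # w # ys)" "length ys = n" "last (w # ys) = v"
    unfolding has_walk_def by (auto simp: length_Suc_conv)
  then show "u \<in> V \<and> (\<exists>w. E u w \<and> has_walk V E w v n)"
    unfolding is_walk_Cons_Cons has_walk_def by (auto intro!: exI[of _ w] exI[of _ "w # ys"])
next
  assume "u \<in> V \<and> (\<exists>w. E u w \<and> has_walk V E w v n)"
  then obtain w ys where "u \<in> V" "E u w" "is_walk V E (w # ys)" "length ys = n" "last (w # ys) = v"
    unfolding has_walk_def by (auto simp: length_Suc_conv)
  then show "has_walk V E u v (Suc n)"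
    unfolding has_walk_def by (intro exI[of _ "u # w # ys"]) (simp add: is_walk_Cons_Cons)
qed

lemma graph_dist_2_iff_common_neighbour:
  assumes "simple_graph V E" "u \<noteq> v" "\<not> E u v"
  shows "graph_dist_is V E u v 2 \<longleftrightarrow> neighbours V E u \<inter> neighbours V E v \<noteq> {}"
proof -
  have "m < 2 \<longleftrightarrow> m = 0 \<or> m = Suc 0" for m :: nat
    by auto
  then have "graph_dist_is V E u v 2 \<longleftrightarrow> has_walk V E u v 2"
    using assms unfolding graph_dist_is_def by (auto simp: has_walk_0 has_walk_Suc)
  also have "\<dots> \<longleftrightarrow> neighbours V E u \<inter> neighbours V E v \<noteq> {}"
    using assms(1) unfolding simple_graph_def neighbours_def
    by (auto simp: numeral_2_eq_2 has_walk_0 has_walk_Suc)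
  finally show ?thesis .
qed

lemma bipartite_finite:
  assumes "bipartite_with V E X Y"
  shows "finite X" "finite Y"
  using assms unfolding bipartite_with_def simple_graph_def by auto

lemma bipartite_neighbours_left:
  assumes "bipartite_with V E X Y" "x \<in> X"
  shows "neighbours V E x = {y\<in>Y. E x y}"
  using assms unfolding bipartite_with_def simple_graph_def neighbours_def by blast

lemma bipartite_neighbours_right:
  assumes "bipartite_with V E X Y" "y \<in> Y"
  shows "neighbours V E y = {x\<in>X. E x y}"
  using assms unfolding bipartite_with_def simple_graph_def neighbours_def by blast

lemma bipartite_sum_degree:
  assumes "bipartite_with V E X Y"
  shows "(\<Sum>x\<in>X. degree V E x) = (\<Sum>y\<in>Y. degree V E y)"
  using sum_multicount_gen[of X Y E "degree V E"] bipartite_finite[OF assms]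
  by (simp add: degree_def bipartite_neighbours_left[OF assms] bipartite_neighbours_right[OF assms])

lemma bipartite_sum_degree_squared:
  assumes "bipartite_with V E X Y"
  shows "(\<Sum>x\<in>X. degree V E x ^ 2) = (\<Sum>y\<in>Y. degree V E y)
           + (\<Sum>y\<in>Y. \<Sum>z\<in>Y-{y}. card (neighbours V E y \<inter> neighbours V E z))"
proof -
  let ?c = "\<lambda>y z. card (neighbours V E y \<inter> neighbours V E z)"
  have fin: "finite X" "finite Y" using bipartite_finite[OF assms] .
  have "(\<Sum>x\<in>X. degree V E x ^ 2) = (\<Sum>y\<in>Y. \<Sum>z\<in>Y. card {x\<in>X. E x y \<and> E x z})"
    using sum_card_related_squared[OF fin, of E]
    by (simp add: degree_def bipartite_neighbours_left[OF assms])
  also have "\<dots> = (\<Sum>y\<in>Y. \<Sum>z\<in>Y. ?c y z)"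
    by (intro sum.cong refl)
      (auto simp: bipartite_neighbours_right[OF assms] intro: arg_cong[where f=card])
  also have "\<dots> = (\<Sum>y\<in>Y. degree V E y + (\<Sum>z\<in>Y-{y}. ?c y z))"
    using fin(2) by (intro sum.cong refl) (simp add: sum.remove degree_def)
  finally show ?thesis
    by (simp add: sum.distrib)
qed

lemma bipartite_dist_2_iff_common_neighbour:
  assumes "bipartite_with V E X Y" "y \<in> Y" "z \<in> Y" "y \<noteq> z"
  shows "graph_dist_is V E y z 2 \<longleftrightarrow> neighbours V E y \<inter> neighbours V E z \<noteq> {}"
proof (rule graph_dist_2_iff_common_neighbour)
  show "simple_graph V E" "y \<noteq> z" "\<not> E y z"
    using assms unfolding bipartite_with_def by auto
qed

lemma card_common_neighbours_le:
  assumes bip: "bipartite_with V E X Y" and mu_pos: "\<mu> > 0"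
    and mu: "\<forall>y1\<in>Y. \<forall>y2\<in>Y. y1 \<noteq> y2 \<and> graph_dist_is V E y1 y2 2 \<longrightarrow>
               card (neighbours V E y1 \<inter> neighbours V E y2) = \<mu>"
    and yz: "y \<in> Y" "z \<in> Y" "y \<noteq> z"
  shows "card (neighbours V E y \<inter> neighbours V E z) \<le> \<mu>"
    and "card (neighbours V E y \<inter> neighbours V E z) = \<mu> \<longleftrightarrow> graph_dist_is V E y z 2"
  using mu mu_pos yz bipartite_dist_2_iff_common_neighbour[OF bip yz] by auto

lemma sum_common_neighbours_le:
  assumes bip: "bipartite_with V E X Y" and mu_pos: "\<mu> > 0"
    and mu: "\<forall>y1\<in>Y. \<forall>y2\<in>Y. y1 \<noteq> y2 \<and> graph_dist_is V E y1 y2 2 \<longrightarrow>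
               card (neighbours V E y1 \<inter> neighbours V E y2) = \<mu>"
  shows "(\<Sum>y\<in>Y. \<Sum>z\<in>Y-{y}. card (neighbours V E y \<inter> neighbours V E z))
           \<le> card Y * (card Y - 1) * \<mu>"
    and "(\<Sum>y\<in>Y. \<Sum>z\<in>Y-{y}. card (neighbours V E y \<inter> neighbours V E z))
           = card Y * (card Y - 1) * \<mu> \<longleftrightarrow>
         (\<forall>y1\<in>Y. \<forall>y2\<in>Y. y1 \<noteq> y2 \<longrightarrow> graph_dist_is V E y1 y2 2)"
  using sum_off_diagonal_le[OF bipartite_finite(2)[OF bip]
      card_common_neighbours_le(1)[OF bip mu_pos mu]]
    card_common_neighbours_le(2)[OF bip mu_pos mu]
  by auto

(* off is the number of paths y - x - z with y <> z: the first hypothesis is the mu-bound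
   on it, the second is Cauchy-Schwarz for the degrees in X. *)
lemma bound_from_pair_counts:
  fixes n m k \<mu> off :: real
  assumes "n > 0" "m > 0" and off_le: "off \<le> m * (m - 1) * \<mu>"
    and cs: "(m * k)\<^sup>2 \<le> n * (m * k + off)"
  shows "(m - 1) * \<mu> \<ge> k * (m * k / n - 1)"
    and "(m - 1) * \<mu> = k * (m * k / n - 1) \<longleftrightarrow>
         (m * k)\<^sup>2 = n * (m * k + off) \<and> off = m * (m - 1) * \<mu>"
proof -
  define gap_dist where "gap_dist = m * (m - 1) * \<mu> - off"
  define gap_deg where "gap_deg = n * (m * k + off) - (m * k)\<^sup>2"
  have gaps: "0 \<le> n * gap_dist" "0 \<le> gap_deg"
    using assms unfolding gap_dist_def gap_deg_def by simp_all
  have key: "n * m * ((m - 1) * \<mu> - k * (m * k / n - 1)) = n * gap_dist + gap_deg"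
    using \<open>n > 0\<close> unfolding gap_dist_def gap_deg_def by (simp add: field_simps power2_eq_square)
  have "0 < n * m" using assms by simp
  moreover have "0 \<le> n * m * ((m - 1) * \<mu> - k * (m * k / n - 1))"
    using key gaps by simp
  ultimately show "(m - 1) * \<mu> \<ge> k * (m * k / n - 1)"
    by (simp add: zero_le_mult_iff)
  have "(m - 1) * \<mu> = k * (m * k / n - 1) \<longleftrightarrow> n * gap_dist + gap_deg = 0"
    using key \<open>0 < n * m\<close> by (metis eq_iff_diff_eq_0 mult_eq_0_iff less_irrefl)
  also have "\<dots> \<longleftrightarrow> gap_dist = 0 \<and> gap_deg = 0"
    using gaps \<open>n > 0\<close> by (simp add: add_nonneg_eq_0_iff)
  finally show "(m - 1) * \<mu> = k * (m * k / n - 1) \<longleftrightarrow>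
        (m * k)\<^sup>2 = n * (m * k + off) \<and> off = m * (m - 1) * \<mu>"
    unfolding gap_dist_def gap_deg_def by auto
qed

theorem lemma3p2:
  fixes V X Y :: "'a set" and E :: "'a \<Rightarrow> 'a \<Rightarrow> bool"
    and s :: "'a \<Rightarrow> nat" and k \<mu> :: nat
  assumes bip: "bipartite_with V E X Y"
    and X_ne: "X \<noteq> {}"
    and Y_ne: "Y \<noteq> {}"
    and mu_pos: "\<mu> > 0"
    and degX: "\<forall>x\<in>X. degree V E x = s x"
    and degY: "\<forall>y\<in>Y. degree V E y = k"
    and mu: "\<forall>y1\<in>Y. \<forall>y2\<in>Y. y1 \<noteq> y2 \<and> graph_dist_is V E y1 y2 2 \<longrightarrow>
               card (neighbours V E y1 \<inter> neighbours V E y2) = \<mu>"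
  shows "(real (card Y) - 1) * real \<mu> \<ge> real k * (real (card Y) * real k / real (card X) - 1)
         \<and> ((real (card Y) - 1) * real \<mu> = real k * (real (card Y) * real k / real (card X) - 1)
             \<longleftrightarrow> (\<forall>x1\<in>X. \<forall>x2\<in>X. s x1 = s x2) \<and>
                 (\<forall>y1\<in>Y. \<forall>y2\<in>Y. y1 \<noteq> y2 \<longrightarrow> graph_dist_is V E y1 y2 2))"
proof -
  define off where "off = (\<Sum>y\<in>Y. \<Sum>z\<in>Y-{y}. card (neighbours V E y \<inter> neighbours V E z))"
  define n m where "n = real (card X)" and "m = real (card Y)"
  have fin: "finite X" "finite Y" using bipartite_finite[OF bip] .
  have "n > 0" "m > 0" using fin X_ne Y_ne by (auto simp: n_def m_def card_gt_0_iff)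
  have sum_s: "(\<Sum>x\<in>X. real (s x)) = m * k"
    using bipartite_sum_degree[OF bip] degX degY by (simp add: m_def flip: of_nat_sum)
  have sum_s2: "(\<Sum>x\<in>X. real (s x) ^ 2) = m * k + off"
    using bipartite_sum_degree_squared[OF bip] degX degY
    by (simp add: m_def off_def flip: of_nat_sum of_nat_power)
  have full: "real (card Y * (card Y - 1) * \<mu>) = m * (m - 1) * \<mu>"
    using \<open>m > 0\<close> by (simp add: m_def)
  have off_le: "off \<le> m * (m - 1) * \<mu>"
    and off_eq: "off = m * (m - 1) * \<mu> \<longleftrightarrow>
                 (\<forall>y1\<in>Y. \<forall>y2\<in>Y. y1 \<noteq> y2 \<longrightarrow> graph_dist_is V E y1 y2 2)"
    unfolding full[symmetric] of_nat_le_iff of_nat_eq_iff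
    using sum_common_neighbours_le[OF bip mu_pos mu, folded off_def] by simp_all
  have cs_le: "(m * k)\<^sup>2 \<le> n * (m * k + off)"
    and cs_eq: "(m * k)\<^sup>2 = n * (m * k + off) \<longleftrightarrow> (\<forall>x1\<in>X. \<forall>x2\<in>X. s x1 = s x2)"
    using square_sum_le_card_mult_sum_squares[of "\<lambda>x. real (s x)" X]
      square_sum_eq_card_mult_sum_squares_iff[OF fin(1), of "\<lambda>x. real (s x)"]
    by (simp_all add: sum_s sum_s2 n_def)
  show ?thesis
    using bound_from_pair_counts[OF \<open>n > 0\<close> \<open>m > 0\<close> off_le cs_le]
    unfolding off_eq cs_eq unfolding n_def m_def by (intro conjI)
qed

end
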